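(* Let $R=\{r\in\mathbb{Z}: 1<r\le 5040,\ G(r)\ge e^\gamma\}$. If $r\in R$ and $p\ge 11$ is prime, then $G(pr)<e^\gamma$.
   Context: For a positive integer $n$, $\sigma(n)=\sum_{d\mid n} d$. For integers $n>1$ define $G(n)=\dfrac{\sigma(n)}{n\log\log n}$ (natural logarithms). $\gamma$ is the Euler–Mascheroni constant, $e^\gamma=1.78107\ldots$. *)

theory Defs
  imports "HOL-Analysis.Analysis" "HOL-Computational_Algebra.Primes"
begin

definition sigma :: "nat \<Rightarrow> nat" where
  "sigma n = (\<Sum>d | d dvd n. d)"

definition G :: "nat \<Rightarrow> real" where
  "G n = real (sigma n) / (real n * ln (ln (real n)))"

end

theory Submission
  imports Defs
begin

text \<open>
  The hypothesis \<open>G r \<ge> exp \<gamma>\<close> is needed only to exclude \<open>r = 2\<close>, where \<open>ln (ln 2) < 0\<close>;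
  the argument gives \<open>G (p * r) < exp \<gamma>\<close> for every \<open>3 \<le> r \<le> 5040\<close> and every prime \<open>p \<ge> 11\<close>.
  Since \<open>\<sigma>\<close> is submultiplicative, \<open>\<sigma>(p r) \<le> (p + 1) \<sigma>(r) \<le> (12/11) p \<sigma>(r)\<close>, and
  \<open>ln ln (p r) \<ge> ln ln (11 r)\<close>, so it suffices to prove
  \<open>12 \<sigma>(r) < 11 r exp \<gamma> ln ln (11 r)\<close> for \<open>3 \<le> r \<le> 5040\<close>.

  For this bound write \<open>r = v k\<close> with \<open>v = 2^a 3^b 5^c 7^d\<close> and all prime factors of \<open>k\<close>
  at least 11.  Then \<open>11^j \<le> k\<close> and \<open>\<sigma>(k)/k \<le> (12/11)^j\<close> for some \<open>j\<close>, while \<open>\<sigma>(v)\<close> is at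
  most a product of geometric sums.  The resulting bound for \<open>\<sigma>(r)/r\<close> depends only on
  \<open>x = v 11^j \<le> r\<close>; a recursive enumeration of all such \<open>x \<le> 5040\<close>, checked by evaluation,
  compares it with a step function below \<open>exp \<gamma> ln ln (11 x)\<close>, whose correctness follows
  from rational lower bounds for \<open>exp \<gamma>\<close> and for logarithms.
\<close>

section \<open>The divisor sum\<close>

text \<open>\<open>\<sigma>\<close> is submultiplicative: every divisor of \<open>a b\<close> is a product of divisors of \<open>a\<close> and \<open>b\<close>.\<close>

lemma sigma_submult:
  fixes a b :: nat
  assumes "0 < a" "0 < b"
  shows "sigma (a * b) \<le> sigma a * sigma b"
proof -
  let ?A = "{d. d dvd a}" and ?B = "{d. d dvd b}"
  have fin: "finite ?A" "finite ?B" using assms by (simp_all add: finite_divisors_nat)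
  have cover: "{d. d dvd a * b} \<subseteq> (\<lambda>(x, y). x * y) ` (?A \<times> ?B)"
  proof
    fix e assume "e \<in> {d. d dvd a * b}"
    then obtain x y where "e = x * y" "x dvd a" "y dvd b"
      by (auto elim: dvd_productE)
    then show "e \<in> (\<lambda>(x, y). x * y) ` (?A \<times> ?B)" by force
  qed
  have "sigma (a * b) \<le> sum (\<lambda>d. d) ((\<lambda>(x, y). x * y) ` (?A \<times> ?B))"
    unfolding sigma_def by (rule sum_mono2) (use cover fin in auto)
  also have "\<dots> \<le> sum ((\<lambda>d. d) \<circ> (\<lambda>(x, y). x * y)) (?A \<times> ?B)"
    by (rule sum_image_le) (use fin in auto)
  also have "\<dots> = sigma a * sigma b"
    unfolding sigma_def comp_def by (simp add: sum_product sum.cartesian_product)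
  finally show ?thesis .
qed

definition geo_sum :: "nat \<Rightarrow> nat \<Rightarrow> nat" where
  "geo_sum p e = (\<Sum>i\<le>e. p ^ i)"

lemma geo_sum_0 [simp]: "geo_sum p 0 = 1"
  by (simp add: geo_sum_def)

lemma geo_sum_Suc: "geo_sum p (Suc e) = p * geo_sum p e + 1"
  unfolding geo_sum_def sum.atMost_Suc_shift by (simp add: sum_distrib_left)

lemma sigma_prime_power:
  fixes p :: nat
  assumes "prime p"
  shows "sigma (p ^ e) = geo_sum p e"
proof -
  have "{d. d dvd p ^ e} = (\<lambda>i. p ^ i) ` {..e}"
    using divides_primepow_nat[OF assms] by auto
  moreover have "inj_on (\<lambda>i. p ^ i) {..e}"
    using prime_gt_1_nat[OF assms] by (auto simp: inj_on_def power_inject_exp)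
  ultimately show ?thesis
    unfolding sigma_def geo_sum_def by (simp add: sum.reindex)
qed

lemma sigma_prime: "prime p \<Longrightarrow> sigma p = p + 1"
  using sigma_prime_power[of p 1] by (simp add: geo_sum_def)

lemma sigma_smooth_le:
  "sigma (2^a * 3^b * 5^c * 7^d) \<le> geo_sum 2 a * geo_sum 3 b * geo_sum 5 c * geo_sum 7 d"
proof -
  have "sigma (2^a * 3^b * 5^c * 7^d) \<le> sigma (2^a * 3^b * 5^c) * sigma (7^d)"
    by (rule sigma_submult) auto
  also have "sigma (2^a * 3^b * 5^c) \<le> sigma (2^a * 3^b) * sigma (5^c)"
    by (rule sigma_submult) auto
  also have "sigma (2^a * 3^b) \<le> sigma (2^a) * sigma (3^b)"
    by (rule sigma_submult) auto
  finally show ?thesis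
    by (simp add: sigma_prime_power)
qed

section \<open>Numbers without small prime factors\<close>

text \<open>If all prime factors of \<open>k\<close> are at least \<open>q\<close>, then \<open>k\<close> has some number \<open>j\<close> of prime
  factors (with multiplicity), so \<open>q^j \<le> k\<close>, and each contributes a factor at most
  \<open>(p + 1)/p \<le> (q + 1)/q\<close> to \<open>\<sigma>(k)/k\<close>.\<close>

lemma rough_sigma_bound:
  fixes k q :: nat
  assumes "0 < k" and "\<And>p. prime p \<Longrightarrow> p dvd k \<Longrightarrow> q \<le> p"
  shows "\<exists>j. q^j \<le> k \<and> q^j * sigma k \<le> (q + 1)^j * k \<and> (j = 0 \<longrightarrow> k = 1)"
  using assms
proof (induction k rule: less_induct)
  case (less k)
  show ?case
  proof (cases "k = 1")
    case True
    then show ?thesis by (intro exI[of _ 0]) (simp add: sigma_def)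
  next
    case False
    then obtain p where p: "prime p" "p dvd k" using prime_factor_nat by blast
    then obtain k' where k': "k = p * k'" by blast
    have "q \<le> p" using less.prems(2) p by blast
    have "0 < k'" using less.prems(1) k' by auto
    have "k' < k" using k' \<open>0 < k'\<close> prime_gt_1_nat[OF p(1)] by simp
    moreover have "\<And>p'. prime p' \<Longrightarrow> p' dvd k' \<Longrightarrow> q \<le> p'"
      using less.prems(2) k' by auto
    ultimately obtain j where j: "q^j \<le> k'" "q^j * sigma k' \<le> (q + 1)^j * k'"
      using less.IH \<open>0 < k'\<close> by blast
    have sigma_k: "sigma k \<le> (p + 1) * sigma k'"
      using sigma_submult[of p k'] sigma_prime[OF p(1)] k' \<open>0 < k'\<close> prime_gt_0_nat[OF p(1)]
      by simp
    have "q^Suc j \<le> k" using j(1) k' \<open>q \<le> p\<close> by (simp add: mult_le_mono)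
    moreover have "q^Suc j * sigma k \<le> (q + 1)^Suc j * k"
    proof -
      have "q^Suc j * sigma k \<le> q * (p + 1) * (q^j * sigma k')"
        using mult_left_mono[OF sigma_k, of "q^Suc j"] by (simp add: algebra_simps)
      also have "\<dots> \<le> q * (p + 1) * ((q + 1)^j * k')"
        using j(2) by (intro mult_left_mono) auto
      also have "\<dots> \<le> (q + 1) * p * ((q + 1)^j * k')"
        using \<open>q \<le> p\<close> by (intro mult_right_mono) (auto simp: algebra_simps)
      also have "\<dots> = (q + 1)^Suc j * k" unfolding k' power_Suc by (simp only: ac_simps)
      finally show ?thesis .
    qed
    ultimately show ?thesis by blast
  qed
qed

lemma smooth_rough_decomposition:
  fixes r :: nat
  assumes "0 < r"
  obtains a b c d k where "r = 2^a * 3^b * 5^c * 7^d * k" "0 < k"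
    and "\<And>p. prime p \<Longrightarrow> p dvd k \<Longrightarrow> 11 \<le> p"
proof -
  obtain y1 where y1: "r = 2 ^ multiplicity 2 r * y1" "\<not> 2 dvd y1"
    using multiplicity_decompose'[of r 2] assms by auto
  then obtain y2 where y2: "y1 = 3 ^ multiplicity 3 y1 * y2" "\<not> 3 dvd y2"
    using multiplicity_decompose'[of y1 3] by (cases "y1 = 0") auto
  then obtain y3 where y3: "y2 = 5 ^ multiplicity 5 y2 * y3" "\<not> 5 dvd y3"
    using multiplicity_decompose'[of y2 5] by (cases "y2 = 0") auto
  then obtain k where k: "y3 = 7 ^ multiplicity 7 y3 * k" "\<not> 7 dvd k"
    using multiplicity_decompose'[of y3 7] by (cases "y3 = 0") auto
  have r: "r = 2 ^ multiplicity 2 r * 3 ^ multiplicity 3 y1 * 5 ^ multiplicity 5 y2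
      * 7 ^ multiplicity 7 y3 * k"
  proof -
    note y1(1)
    also note y2(1)
    also note y3(1)
    also note k(1)
    finally show ?thesis by (simp add: mult_ac)
  qed
  have "k dvd y3" "y3 dvd y2" "y2 dvd y1"
    using k(1) y3(1) y2(1) by (metis dvd_triv_right)+
  then have no_small: "\<not> 2 dvd k" "\<not> 3 dvd k" "\<not> 5 dvd k" "\<not> 7 dvd k"
    using y1(2) y2(2) y3(2) k(2) dvd_trans by blast+
  have "11 \<le> p" if "prime p" "p dvd k" for p
  proof -
    have "\<not> q dvd p" if "q dvd k \<Longrightarrow> False" for q
      using that \<open>p dvd k\<close> dvd_trans by blast
    with no_small have "\<not> 2 dvd p" "\<not> 3 dvd p" "\<not> 5 dvd p" "\<not> 7 dvd p" by blast+
    moreover have "2 \<le> p" using prime_ge_2_nat[OF \<open>prime p\<close>] .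
    ultimately show ?thesis by presburger
  qed
  moreover have "0 < k" using r assms by (cases k) auto
  ultimately show ?thesis using that r by blast
qed

section \<open>Rational lower bounds for \<open>exp \<gamma>\<close> and \<open>ln ln\<close>\<close>

lemma exp_partial_sum_le:
  fixes x :: real
  assumes "0 \<le> x"
  shows "(\<Sum>i<n. x^i / fact i) \<le> exp x"
proof -
  have sums: "(\<lambda>i. x^i / fact i) sums exp x"
    using exp_converges[of x] by (simp add: divide_inverse mult.commute scaleR_conv_of_real)
  have "(\<Sum>i<n. x^i / fact i) \<le> suminf (\<lambda>i. x^i / fact i)"
    by (rule sum_le_suminf) (use sums assms in \<open>auto simp: sums_iff\<close>)
  then show ?thesis using sums by (simp add: sums_iff)
qed

text \<open>Six terms of the series at \<open>\<gamma> > 19/33\<close> give \<open>exp \<gamma> \<ge> 1.778\<close> (true value \<open>1.7810\<dots>\<close>).\<close>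

lemma exp_euler_mascheroni_ge: "1778/1000 \<le> exp (euler_mascheroni :: real)"
proof -
  have "(1778/1000 :: real) \<le> (\<Sum>i<6. (19/33)^i / fact i)"
    by (simp add: eval_nat_numeral)
  also have "\<dots> \<le> exp (19/33)" by (rule exp_partial_sum_le) simp
  also have "\<dots> \<le> exp euler_mascheroni" using euler_mascheroni_gt_19_over_33 by simp
  finally show ?thesis .
qed

text \<open>A rational lower bound for \<open>ln (2^k q)\<close> when \<open>q > 1\<close>: \<open>ln 2 \<ge> 0.6931\<close>, and the first two
  terms of the series \<open>ln q = 2 (y + y^3/3 + \<dots>)\<close> with \<open>y = (q - 1)/(q + 1)\<close>.\<close>

definition ln_lower :: "nat \<Rightarrow> real \<Rightarrow> real" where
  "ln_lower k q = real k * (6931/10000) + (2 * ((q-1)/(q+1)) + 2/3 * ((q-1)/(q+1))^3)"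

lemma ln_lower_le:
  fixes q X :: real
  assumes "1 < q" "2^k * q \<le> X"
  shows "ln_lower k q \<le> ln X"
proof -
  have "(\<Sum>i<2. 2 * ((q-1)/(q+1))^(2*i+1) / of_nat (2*i+1))
      = 2 * ((q-1)/(q+1)) + 2/3 * ((q-1)/(q+1))^3"
    by (simp add: eval_nat_numeral)
  then have series: "2 * ((q-1)/(q+1)) + 2/3 * ((q-1)/(q+1))^3 \<le> ln q"
    using ln_approx_bounds(1)[of q 2] assms(1) by simp
  have ln2: "real k * (6931/10000) \<le> real k * ln 2"
    using ln_approx_bounds[of 2 4] by (intro mult_left_mono) (simp_all add: eval_nat_numeral)
  have "0 < 2^k * q" using assms(1) by simp
  then have "ln (2^k * q) \<le> ln X" using assms(2) by simp
  moreover have "ln (2^k * q) = real k * ln 2 + ln q"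
    using assms(1) by (simp add: ln_mult ln_realpow)
  ultimately show ?thesis using series ln2 unfolding ln_lower_def by linarith
qed

text \<open>Two applications of \<open>ln_lower_le\<close> bound \<open>ln ln (11 x)\<close> from below for all \<open>x \<ge> a\<close>;
  combined with \<open>exp \<gamma> \<ge> 1.778\<close> this certifies a lower bound \<open>c\<close> for
  \<open>1000 exp \<gamma> ln ln (11 x)\<close>.\<close>

lemma lnln_threshold:
  fixes x qa qb c :: real and a ka kb :: nat
  assumes "real a \<le> x" "1 < qa" "2^ka * qa \<le> 11 * real a"
    and "1 < qb" "2^kb * qb \<le> ln_lower ka qa"
    and "0 \<le> c" "c \<le> 1778 * ln_lower kb qb"
  shows "c \<le> 1000 * exp euler_mascheroni * ln (ln (11 * x))"
proof -
  have "0 < 2^ka * qa" "0 < 2^kb * qb" using assms(2,4) by simp_all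
  then have "ln_lower ka qa \<le> ln (11 * x)"
    using ln_lower_le[OF assms(2)] assms(1,3) by simp
  then have t: "ln_lower kb qb \<le> ln (ln (11 * x))"
    using ln_lower_le[OF assms(4)] assms(5) \<open>0 < 2^kb * qb\<close> by simp
  have "0 \<le> ln_lower kb qb" using assms(6,7) by linarith
  then have "1778 * ln_lower kb qb \<le> 1000 * exp euler_mascheroni * ln_lower kb qb"
    using exp_euler_mascheroni_ge by (intro mult_right_mono) auto
  also have "\<dots> \<le> 1000 * exp euler_mascheroni * ln (ln (11 * x))"
    using t by (intro mult_left_mono) auto
  finally show ?thesis using assms(7) by linarith
qed

definition lnln_floor :: "nat \<Rightarrow> nat" where
  "lnln_floor x =
    (if 3696 \<le> x then 4190 else if 1701 \<le> x then 4055 else if 640 \<le> x then 3870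
     else if 150 \<le> x then 3550 else if 54 \<le> x then 3280 else if 14 \<le> x then 2820
     else if 7 \<le> x then 2550 else 2190)"

lemma lnln_floor_le:
  fixes x :: nat
  assumes "3 \<le> x"
  shows "real (lnln_floor x) \<le> 1000 * exp euler_mascheroni * ln (ln (11 * real x))"
proof -
  note thr = lnln_threshold[of _ "real x"]
  have "2190 \<le> 1000 * exp euler_mascheroni * ln (ln (11 * real x))"
    by (rule thr[where a=3 and ka=5 and qa="33/32" and kb=1 and qb="437/250"])
      (use assms in \<open>simp_all add: ln_lower_def power3_eq_cube\<close>)
  moreover have "2550 \<le> 1000 * exp euler_mascheroni * ln (ln (11 * real x))" if "7 \<le> x"
    by (rule thr[where a=7 and ka=6 and qa="77/64" and kb=2 and qb="4343/4000"])
      (use that in \<open>simp_all add: ln_lower_def power3_eq_cube\<close>)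
  moreover have "2820 \<le> 1000 * exp euler_mascheroni * ln (ln (11 * real x))" if "14 \<le> x"
    by (rule thr[where a=14 and ka=7 and qa="77/64" and kb=2 and qb="1259/1000"])
      (use that in \<open>simp_all add: ln_lower_def power3_eq_cube\<close>)
  moreover have "3280 \<le> 1000 * exp euler_mascheroni * ln (ln (11 * real x))" if "54 \<le> x"
    by (rule thr[where a=54 and ka=9 and qa="297/256" and kb=2 and qb="3193/2000"])
      (use that in \<open>simp_all add: ln_lower_def power3_eq_cube\<close>)
  moreover have "3550 \<le> 1000 * exp euler_mascheroni * ln (ln (11 * real x))" if "150 \<le> x"
    by (rule thr[where a=150 and ka=10 and qa="825/512" and kb=2 and qb="7407/4000"])
      (use that in \<open>simp_all add: ln_lower_def power3_eq_cube\<close>)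
  moreover have "3870 \<le> 1000 * exp euler_mascheroni * ln (ln (11 * real x))" if "640 \<le> x"
    by (rule thr[where a=640 and ka=12 and qa="55/32" and kb=3 and qb="4429/4000"])
      (use that in \<open>simp_all add: ln_lower_def power3_eq_cube\<close>)
  moreover have "4055 \<le> 1000 * exp euler_mascheroni * ln (ln (11 * real x))" if "1701 \<le> x"
    by (rule thr[where a=1701 and ka=14 and qa="18711/16384" and kb=3 and qb="2459/2000"])
      (use that in \<open>simp_all add: ln_lower_def power3_eq_cube\<close>)
  moreover have "4190 \<le> 1000 * exp euler_mascheroni * ln (ln (11 * real x))" if "3696 \<le> x"
    by (rule thr[where a=3696 and ka=15 and qa="2541/2048" and kb=3 and qb="2653/2000"])
      (use that in \<open>simp_all add: ln_lower_def power3_eq_cube\<close>)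
  ultimately show ?thesis unfolding lnln_floor_def by simp
qed

section \<open>The finite check\<close>

text \<open>\<open>rough_ok x w\<close> checks the inequality \<open>12000 w 12^j < 11 x 11^j lnln_floor (x 11^j)\<close>
  for all \<open>j\<close> with \<open>3 \<le> x 11^j \<le> 5040\<close>; here \<open>w\<close> is the bound for the divisor sum of the
  7-smooth part and \<open>(12/11)^j\<close> accounts for the remaining part.\<close>

function rough_ok :: "nat \<Rightarrow> nat \<Rightarrow> bool" where
  "rough_ok x w =
    (if x = 0 \<or> 5040 < x then True
     else (3 \<le> x \<longrightarrow> 12000 * w < 11 * x * lnln_floor x) \<and> rough_ok (11 * x) (12 * w))"
  by auto
termination by (relation "Wellfounded.measure (\<lambda>(x, w). 5041 - x)") auto

text \<open>\<open>smooth_ok ps x u t\<close> runs over all multiples \<open>x p^e\<close> (for the first prime \<open>p\<close> of \<open>ps\<close>) not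
  exceeding 5040, where \<open>t\<close> is the current geometric sum \<open>geo_sum p e\<close> and \<open>u\<close> the product of
  the geometric sums of the primes already treated; when \<open>ps\<close> is exhausted it hands over to
  \<open>rough_ok\<close>.\<close>

function smooth_ok :: "nat list \<Rightarrow> nat \<Rightarrow> nat \<Rightarrow> nat \<Rightarrow> bool" where
  "smooth_ok [] x u t = rough_ok x u"
| "smooth_ok (p # ps) x u t =
    (if x = 0 \<or> 5040 < x then True
     else if p < 2 then False
     else smooth_ok ps x (u * t) 1 \<and> smooth_ok (p # ps) (p * x) u (p * t + 1))"
  by pat_completeness auto
termination
  by (relation "measures [\<lambda>(ps, x, u, t). 5041 - x, \<lambda>(ps, x, u, t). length ps]")
    (auto intro!: diff_less_mono2 n_less_m_mult_n)

declare rough_ok.simps [simp del] smooth_ok.simps(2) [simp del]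

text \<open>Soundness of the two checks: unrolling the recursion \<open>j\<close> (resp.\ \<open>d\<close>) times keeps
  the invariant that the second argument is the geometric-sum bound belonging to the first.\<close>

lemma rough_ok_sound:
  assumes "rough_ok x w" "0 < x" "x * 11^j \<le> 5040" "3 \<le> x * 11^j"
  shows "12000 * (w * 12^j) < 11 * (x * 11^j) * lnln_floor (x * 11^j)"
  using assms
proof (induction j arbitrary: x w)
  case 0
  then show ?case using rough_ok.simps[of x w] by simp
next
  case (Suc j)
  have "x \<le> 5040" using Suc.prems(3) order.trans[of x "x * 11^Suc j"] by simp
  then have "rough_ok (11 * x) (12 * w)" using Suc.prems(1,2) rough_ok.simps[of x w] by simp
  from Suc.IH[OF this] Suc.prems(2-4) show ?case by (simp add: mult_ac)
qed

lemma smooth_ok_sound: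
  assumes "smooth_ok (p # ps) x u (geo_sum p e)" "0 < x" "x * p^d \<le> 5040" "2 \<le> p"
  shows "smooth_ok ps (x * p^d) (u * geo_sum p (e + d)) 1"
  using assms
proof (induction d arbitrary: x e)
  case 0
  then show ?case using smooth_ok.simps(2)[of p ps x u "geo_sum p e"] by (simp split: if_splits)
next
  case (Suc d)
  have "x \<le> 5040"
    using Suc.prems(3,4) order.trans[of x "x * p^Suc d"] by simp
  then have "smooth_ok (p # ps) (p * x) u (geo_sum p (Suc e))"
    using Suc.prems(1,2,4) smooth_ok.simps(2)[of p ps x u "geo_sum p e"]
    by (simp add: geo_sum_Suc split: if_splits)
  from Suc.IH[OF this] Suc.prems(2-4) show ?case by (simp add: mult_ac)
qed

lemma smooth_ok_certificate: "smooth_ok [2, 3, 5, 7] 1 1 1"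
  by (simp add: smooth_ok.simps rough_ok.simps lnln_floor_def)

lemma smooth_table:
  fixes a b c d j :: nat
  defines "x \<equiv> 2^a * 3^b * 5^c * 7^d * 11^j"
  assumes "3 \<le> x" "x \<le> 5040"
  shows "12000 * (geo_sum 2 a * geo_sum 3 b * geo_sum 5 c * geo_sum 7 d * 12^j)
    < 11 * x * lnln_floor x"
proof -
  have b7: "2^a * 3^b * 5^c * 7^d \<le> (5040::nat)"
    using order.trans[OF _ assms(3)] unfolding x_def by simp
  have b5: "2^a * 3^b * 5^c \<le> (5040::nat)" using order.trans[OF _ b7] by simp
  have b3: "2^a * 3^b \<le> (5040::nat)" using order.trans[OF _ b5] by simp
  have b2: "1 * 2^a \<le> (5040::nat)" using order.trans[OF _ b3] by simp
  have "smooth_ok [2, 3, 5, 7] 1 1 (geo_sum 2 0)"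
    using smooth_ok_certificate by simp
  from smooth_ok_sound[OF this _ b2] have "smooth_ok [3, 5, 7] (2^a) (geo_sum 2 a) (geo_sum 3 0)"
    by simp
  from smooth_ok_sound[OF this _ b3]
  have "smooth_ok [5, 7] (2^a * 3^b) (geo_sum 2 a * geo_sum 3 b) (geo_sum 5 0)"
    by simp
  from smooth_ok_sound[OF this _ b5]
  have "smooth_ok [7] (2^a * 3^b * 5^c) (geo_sum 2 a * geo_sum 3 b * geo_sum 5 c) (geo_sum 7 0)"
    by simp
  from smooth_ok_sound[OF this _ b7]
  have "rough_ok (2^a * 3^b * 5^c * 7^d) (geo_sum 2 a * geo_sum 3 b * geo_sum 5 c * geo_sum 7 d)"
    by simp
  from rough_ok_sound[OF this] assms(2,3) show ?thesis
    unfolding x_def by (simp add: mult_ac)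
qed

lemma sigma_table_bound:
  fixes r :: nat
  assumes "3 \<le> r" "r \<le> 5040"
  obtains x where "3 \<le> x" "x \<le> r" "12000 * sigma r < 11 * r * lnln_floor x"
proof -
  from assms(1) have "0 < r" by simp
  then obtain a b c d k where r: "r = 2^a * 3^b * 5^c * 7^d * k" "0 < k"
    and rough: "\<And>p. prime p \<Longrightarrow> p dvd k \<Longrightarrow> 11 \<le> p"
    by (rule smooth_rough_decomposition) blast
  obtain j where j: "11^j \<le> k" "11^j * sigma k \<le> 12^j * k" "j = 0 \<longrightarrow> k = 1"
    using rough_sigma_bound[OF r(2) rough] by auto
  define v where "v = (2::nat)^a * 3^b * 5^c * 7^d"
  define U where "U = geo_sum 2 a * geo_sum 3 b * geo_sum 5 c * geo_sum 7 d"
  define x where "x = v * 11^j"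
  have "0 < v" unfolding v_def by simp
  have "x \<le> r" unfolding x_def r(1) v_def[symmetric] using j(1) by simp
  have "3 \<le> x"
  proof (cases "j = 0")
    case True
    then show ?thesis using j(3) assms(1) r(1) unfolding x_def v_def by simp
  next
    case False
    then have "11 \<le> (11::nat)^j" by (cases j) auto
    also have "\<dots> \<le> x" unfolding x_def using \<open>0 < v\<close> by simp
    finally show ?thesis by simp
  qed
  have table: "12000 * (U * 12^j) < 11 * x * lnln_floor x"
    using smooth_table[of a b c d j] \<open>3 \<le> x\<close> \<open>x \<le> r\<close> assms(2)
    unfolding x_def v_def U_def by (simp add: mult_ac)
  have "sigma r \<le> sigma v * sigma k"
    unfolding r(1) v_def[symmetric] using sigma_submult \<open>0 < v\<close> r(2) by blast
  also have "sigma v \<le> U"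
    unfolding v_def U_def by (rule sigma_smooth_le)
  finally have sigma_r: "sigma r \<le> U * sigma k" by simp
  have "11^j * (12000 * sigma r) \<le> 12000 * U * (11^j * sigma k)"
    using sigma_r by (simp add: mult_ac)
  also have "\<dots> \<le> 12000 * U * (12^j * k)" using j(2) by simp
  also have "\<dots> = 12000 * (U * 12^j) * k" by (simp add: mult_ac)
  also have "\<dots> < (11 * x * lnln_floor x) * k" using table r(2) by simp
  also have "\<dots> = 11^j * (11 * r * lnln_floor x)"
    unfolding x_def r(1) v_def by (simp add: mult_ac)
  finally have "12000 * sigma r < 11 * r * lnln_floor x" by simp
  with \<open>3 \<le> x\<close> \<open>x \<le> r\<close> show ?thesis by (rule that)
qed

lemma small_sigma_bound:
  fixes r :: nat
  assumes "3 \<le> r" "r \<le> 5040"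
  shows "12 * real (sigma r) < 11 * real r * exp euler_mascheroni * ln (ln (11 * real r))"
proof -
  obtain x where x: "3 \<le> x" "x \<le> r" "12000 * sigma r < 11 * r * lnln_floor x"
    using sigma_table_bound[OF assms] .
  have "0 < ln (11 * real x)" using x(1) by simp
  moreover have "ln (11 * real x) \<le> ln (11 * real r)" using x(1,2) by simp
  ultimately have lnln_mono: "ln (ln (11 * real x)) \<le> ln (ln (11 * real r))" by simp
  have "real (lnln_floor x) \<le> 1000 * exp euler_mascheroni * ln (ln (11 * real x))"
    using lnln_floor_le[OF x(1)] .
  also have "\<dots> \<le> 1000 * exp euler_mascheroni * ln (ln (11 * real r))"
    using lnln_mono by (intro mult_left_mono) auto
  finally have "11 * real r * real (lnln_floor x)
      \<le> 11 * real r * (1000 * exp euler_mascheroni * ln (ln (11 * real r)))"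
    by (intro mult_left_mono) auto
  moreover have "12000 * real (sigma r) < 11 * real r * real (lnln_floor x)"
    using x(3) by (metis of_nat_less_iff of_nat_mult of_nat_numeral)
  ultimately show ?thesis by (simp add: algebra_simps)
qed

lemma G_two_negative: "G 2 < 0"
proof -
  have "ln (ln (2::real)) < 0" using ln_2_less_1 by simp
  moreover have "sigma 2 = 3" using sigma_prime[of 2] by simp
  ultimately show ?thesis unfolding G_def by (simp add: divide_pos_neg)
qed

lemma G_prime_multiple_less:
  fixes r p :: nat
  assumes "3 \<le> r" "r \<le> 5040" "prime p" "11 \<le> p"
  shows "G (p * r) < exp euler_mascheroni"
proof -
  let ?L = "ln (ln (real (p * r)))"
  have "0 < real (lnln_floor r)" unfolding lnln_floor_def by simp
  also have "\<dots> \<le> 1000 * exp euler_mascheroni * ln (ln (11 * real r))"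
    using lnln_floor_le[OF assms(1)] .
  finally have "0 < ln (ln (11 * real r))" by (simp add: zero_less_mult_iff)
  moreover have "ln (ln (11 * real r)) \<le> ?L"
  proof -
    have "11 * r \<le> p * r" using assms(4) by simp
    then have "11 * real r \<le> real (p * r)" by (metis of_nat_le_iff of_nat_mult of_nat_numeral)
    then have "ln (11 * real r) \<le> ln (real (p * r))"
      using assms(1) by (intro ln_mono) auto
    moreover have "0 < ln (11 * real r)" using assms(1) by simp
    ultimately show ?thesis by (rule ln_mono)
  qed
  ultimately have "0 < ?L" and lnln_mono: "ln (ln (11 * real r)) \<le> ?L" by auto
  have "11 * sigma (p * r) \<le> 11 * ((p + 1) * sigma r)"
    using sigma_submult[of p r] sigma_prime[OF assms(3)] assms(1,4) by simp
  also have "\<dots> \<le> p * (12 * sigma r)" using assms(4) by simp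
  finally have "11 * real (sigma (p * r)) \<le> real p * (12 * real (sigma r))"
    by (metis of_nat_le_iff of_nat_mult of_nat_numeral)
  also have "\<dots> < real p * (11 * real r * exp euler_mascheroni * ln (ln (11 * real r)))"
    using small_sigma_bound[OF assms(1,2)] assms(4) by simp
  also have "\<dots> \<le> real p * (11 * real r * exp euler_mascheroni * ?L)"
    using lnln_mono by (intro mult_left_mono) auto
  finally have "real (sigma (p * r)) < exp euler_mascheroni * (real (p * r) * ?L)"
    by (simp add: algebra_simps)
  moreover have "0 < real (p * r) * ?L" using \<open>0 < ?L\<close> assms(1,4) by simp
  ultimately show ?thesis unfolding G_def by (simp add: divide_less_eq)
qed

theorem lemma3:
  fixes r p :: nat
  assumes "1 < r" and "r \<le> 5040" and "G r \<ge> exp euler_mascheroni"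
    and "prime p" and "p \<ge> 11"
  shows "G (p * r) < exp euler_mascheroni"
proof -
  have "r \<noteq> 2"
    using assms(3) G_two_negative exp_gt_zero[of euler_mascheroni] by fastforce
  then have "3 \<le> r" using assms(1) by simp
  then show ?thesis using G_prime_multiple_less assms(2,4,5) by blast
qed

end
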